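(* The set $\{V(n)/\varphi(n) : n\ge1\}$ is dense in the interval $(1,+\infty)$; that is, every nonempty open subinterval of $(1,+\infty)$ contains an element of this set.
   Context: For a positive integer $n$, an integer $a$ is called regular modulo $n$ if there exists an integer $x$ with $a^2x\equiv a \pmod n$. Let $V(n)$ denote the number of integers $a$ with $1\le a\le n$ that are regular modulo $n$. (Known fact: $V$ is multiplicative, $V(1)=1$, and $V(p^{\alpha})=p^{\alpha}-p^{\alpha-1}+1$ for a prime $p$ and $\alpha\ge1$.) $\varphi$ is Euler's totient function. *)

theory Defs
  imports "HOL-Number_Theory.Number_Theory"
begin

definition regular_mod :: "nat \<Rightarrow> int \<Rightarrow> bool" where
  "regular_mod n a \<longleftrightarrow> (\<exists>x::int. [a^2 * x = a] (mod int n))"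

definition V :: "nat \<Rightarrow> nat" where
  "V n = card {a::int. 1 \<le> a \<and> a \<le> int n \<and> regular_mod n a}"

end

theory Submission
  imports Defs "HOL-Analysis.Harmonic_Numbers"
begin

(* If n is the product of a finite set S of distinct primes, then every positive
   integer is regular modulo n (Fermat's little theorem gives a^(T+1) = a mod n for T the
   product of the p - 1), so V(n) = n and V(n)/phi(n) is the Euler product
   euler_prod S = prod_{p in S} p/(p-1).

   Given 1 <= a < b, choose N so large that every factor p/(p-1) with p > N is
   below b/a, and look at Q(M) = euler_prod (primes_between N M), the product over
   the primes in (N, M].  Q starts at 1,
   is unbounded (the Euler product over the primes up to M dominates the harmonic
   number H_M, which diverges), and grows at each step by a factor below b/a.  A
   discrete intermediate-value argument therefore finds M with a < Q(M) < b, and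
   n = product of the primes in (N, M] is the required witness. *)

section \<open>Products of distinct primes\<close>

text \<open>Fermat's little theorem in the form that also covers multiples of p:
  every k satisfies k^(T+1) = k modulo p as soon as p - 1 divides T.\<close>
lemma fermat_power_cong:
  fixes p k T :: nat
  assumes "prime p" "(p - 1) dvd T"
  shows "[k ^ (T + 1) = k] (mod p)"
proof (cases "p dvd k")
  case True
  then have "[k ^ (T + 1) = 0] (mod p)" and "[k = 0] (mod p)"
    by (simp_all add: cong_0_iff)
  then show ?thesis using cong_sym cong_trans by blast
next
  case False
  obtain c where c: "T = (p - 1) * c" using assms(2) by blast
  have "[(k ^ (p - 1)) ^ c = 1 ^ c] (mod p)"
    using fermat_theorem[OF assms(1) False] by (rule cong_pow)
  then have "[k ^ T * k = 1 * k] (mod p)"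
    by (intro cong_mult) (simp_all add: c power_mult)
  then show ?thesis by (simp add: mult.commute)
qed

text \<open>Modulo a product of distinct primes every non-negative integer is regular:
  the exponent T = prod (p - 1) makes a^2 * a^(T-1) = a hold modulo each prime,
  hence modulo their product.\<close>
lemma regular_mod_prod_primes:
  fixes S :: "nat set" and a :: int
  assumes "finite S" "\<forall>p\<in>S. prime p" "0 \<le> a"
  shows "regular_mod (\<Prod>S) a"
proof -
  define T where "T = (\<Prod>p\<in>S. p - 1)"
  define k where "k = nat a"
  have "T > 0" unfolding T_def using assms prime_gt_1_nat by (intro prod_pos) auto
  have "[k ^ (T + 1) = k] (mod (\<Prod>p\<in>S. id p))"
  proof (rule coprime_cong_prod_nat)
    show "coprime (id p) (id q)" if "p \<in> S" "q \<in> S" "p \<noteq> q" for p q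
      using that assms by (simp add: primes_coprime)
    show "[k ^ (T + 1) = k] (mod id p)" if "p \<in> S" for p
      using that assms fermat_power_cong dvd_prodI[OF assms(1) that, of "\<lambda>p. p - 1"]
      by (simp add: T_def)
  qed
  then have "[a ^ (T + 1) = a] (mod int (\<Prod>S))"
    using assms(3) by (simp add: k_def cong_int_iff[symmetric])
  moreover have "a ^ (T + 1) = a\<^sup>2 * a ^ (T - 1)"
    using \<open>T > 0\<close> by (simp flip: power_add)
  ultimately show ?thesis unfolding regular_mod_def by auto
qed

lemma V_prod_primes:
  fixes S :: "nat set"
  assumes "finite S" "\<forall>p\<in>S. prime p"
  shows "V (\<Prod>S) = \<Prod>S"
proof -
  have "{a::int. 1 \<le> a \<and> a \<le> int (\<Prod>S) \<and> regular_mod (\<Prod>S) a} = {1..int (\<Prod>S)}"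
    using regular_mod_prod_primes[OF assms] by auto
  then show ?thesis unfolding V_def by (simp flip: of_nat_prod)
qed

lemma totient_prod_primes:
  fixes S :: "nat set"
  assumes "finite S" "\<forall>p\<in>S. prime p"
  shows "totient (\<Prod>S) = (\<Prod>p\<in>S. p - 1)"
proof -
  have "totient (prod id S) = (\<Prod>p\<in>S. totient (id p))"
    by (rule totient_prod_coprime) (use assms in \<open>auto simp: pairwise_def primes_coprime\<close>)
  then show ?thesis using assms by (simp add: totient_prime)
qed

definition euler_prod :: "nat set \<Rightarrow> real" where
  "euler_prod P = (\<Prod>p\<in>P. real p / (real p - 1))"

lemma euler_prod_pos:
  assumes "\<forall>p\<in>P. prime p"
  shows "euler_prod P > 0"
  unfolding euler_prod_def
proof (rule prod_pos)
  show "0 < real p / (real p - 1)" if "p \<in> P" for p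
    using that assms prime_ge_2_nat[of p] by simp
qed

lemma V_totient_ratio_prod_primes:
  fixes S :: "nat set"
  assumes "finite S" "\<forall>p\<in>S. prime p"
  shows "real (V (\<Prod>S)) / real (totient (\<Prod>S)) = euler_prod S"
proof -
  have "real (totient (\<Prod>S)) = (\<Prod>p\<in>S. real (p - 1))"
    by (simp add: totient_prod_primes[OF assms])
  also have "\<dots> = (\<Prod>p\<in>S. real p - 1)"
  proof (rule prod.cong)
    show "real (p - 1) = real p - 1" if "p \<in> S" for p
      using that assms prime_ge_1_nat[of p] by (simp add: of_nat_diff)
  qed simp
  finally show ?thesis
    by (simp add: V_prod_primes[OF assms] euler_prod_def prod_dividef)
qed

section \<open>The Euler product dominates the harmonic numbers\<close>

lemma geometric_sum_le:
  fixes q :: nat and F :: "nat set"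
  assumes "q \<ge> 2" "finite F"
  shows "(\<Sum>j\<in>F. (1 / real q) ^ j) \<le> real q / (real q - 1)"
proof -
  obtain N where N: "F \<subseteq> {..<N}" using assms(2) finite_nat_iff_bounded by auto
  have "(\<Sum>j\<in>F. (1 / real q) ^ j) \<le> (\<Sum>j<N. (1 / real q) ^ j)"
    by (rule sum_mono2) (use N in auto)
  also have "\<dots> = (1 - (1 / real q) ^ N) / (1 - 1 / real q)"
    using assms(1) by (subst sum_gp_strict) auto
  also have "\<dots> \<le> 1 / (1 - 1 / real q)"
    using assms(1) by (intro divide_right_mono) auto
  also have "\<dots> = real q / (real q - 1)"
    using assms(1) by (simp add: field_simps)
  finally show ?thesis .
qed

text \<open>Splitting off the q-part n = q^j * m of each n bounds a sum of reciprocals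
  by a product of a geometric sum (over the exponents j) and a sum of reciprocals
  of the cofactors m.\<close>
lemma sum_inverse_split_prime:
  fixes q :: nat and A :: "nat set"
  assumes "finite A"
  shows "(\<Sum>n\<in>A. 1 / real n) \<le>
    (\<Sum>j\<in>multiplicity q ` A. (1 / real q) ^ j) *
    (\<Sum>m\<in>(\<lambda>n. n div q ^ multiplicity q n) ` A. 1 / real m)"
proof -
  define g where "g n = (multiplicity q n, n div q ^ multiplicity q n)" for n
  define h where "h = (\<lambda>(j::nat, m::nat). (1 / real q) ^ j * (1 / real m))"
  have decomp: "n = q ^ fst (g n) * snd (g n)" for n
    unfolding g_def using multiplicity_dvd[of q n] by simp
  have "inj_on g A" by (rule inj_onI) (metis decomp)
  have "(\<Sum>n\<in>A. 1 / real n) = (\<Sum>n\<in>A. h (g n))"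
  proof (rule sum.cong)
    show "1 / real n = h (g n)" if "n \<in> A" for n
      using arg_cong[OF decomp[of n], of real]
      by (simp add: h_def case_prod_beta power_one_over)
  qed simp
  also have "\<dots> = (\<Sum>x\<in>g ` A. h x)"
    using sum.reindex[OF \<open>inj_on g A\<close>, of h] by simp
  also have "\<dots> \<le> (\<Sum>x\<in>multiplicity q ` A \<times> (\<lambda>n. n div q ^ multiplicity q n) ` A. h x)"
    using assms by (intro sum_mono2) (auto simp: g_def h_def case_prod_beta)
  also have "\<dots> = (\<Sum>j\<in>multiplicity q ` A. (1 / real q) ^ j) *
      (\<Sum>m\<in>(\<lambda>n. n div q ^ multiplicity q n) ` A. 1 / real m)"
    unfolding h_def sum_product sum.cartesian_product by simp
  finally show ?thesis .
qed

lemma prime_factors_cofactor: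
  fixes q n :: nat
  assumes "prime q" "n > 0"
  shows "n div q ^ multiplicity q n > 0"
    and "prime_factors (n div q ^ multiplicity q n) \<subseteq> prime_factors n - {q}"
proof -
  define m where "m = n div q ^ multiplicity q n"
  have n_eq: "n = q ^ multiplicity q n * m"
    unfolding m_def using multiplicity_dvd[of q n] by simp
  then show "m > 0" using assms(2) by (cases "m = 0") auto
  have "\<not> q dvd m"
    unfolding m_def using assms by (intro multiplicity_decompose) auto
  moreover have "m dvd n" using n_eq by (metis dvd_triv_right)
  ultimately show "prime_factors m \<subseteq> prime_factors n - {q}"
    using assms(2) by (auto simp: in_prime_factors_iff intro: dvd_trans)
qed

lemma sum_inverse_le_euler_prod:
  fixes P A :: "nat set"
  assumes "finite P" "\<forall>p\<in>P. prime p" "finite A" "\<forall>n\<in>A. n > 0 \<and> prime_factors n \<subseteq> P"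
  shows "(\<Sum>n\<in>A. 1 / real n) \<le> euler_prod P"
  using assms
proof (induction P arbitrary: A rule: finite_induct)
  case empty
  then have "A \<subseteq> {1}" by (auto simp: prime_factorization_empty_iff)
  then have "(\<Sum>n\<in>A. 1 / real n) \<le> (\<Sum>n\<in>{1::nat}. 1 / real n)"
    by (intro sum_mono2) auto
  then show ?case by (simp add: euler_prod_def)
next
  case (insert q P A)
  define C where "C = (\<lambda>n. n div q ^ multiplicity q n) ` A"
  have "prime q" "q \<ge> 2" using insert.prems prime_ge_2_nat by auto
  have C_factors: "\<forall>m\<in>C. m > 0 \<and> prime_factors m \<subseteq> P"
  proof
    fix m assume "m \<in> C"
    then obtain n where "n \<in> A" "m = n div q ^ multiplicity q n" by (auto simp: C_def)
    then show "m > 0 \<and> prime_factors m \<subseteq> P"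
      using prime_factors_cofactor[OF \<open>prime q\<close>, of n] insert.prems by blast
  qed
  have "(\<Sum>n\<in>A. 1 / real n) \<le> (\<Sum>j\<in>multiplicity q ` A. (1 / real q) ^ j) * (\<Sum>m\<in>C. 1 / real m)"
    unfolding C_def using insert.prems by (intro sum_inverse_split_prime) auto
  also have "\<dots> \<le> (real q / (real q - 1)) * euler_prod P"
  proof (rule mult_mono)
    show "(\<Sum>j\<in>multiplicity q ` A. (1 / real q) ^ j) \<le> real q / (real q - 1)"
      using \<open>q \<ge> 2\<close> insert.prems by (intro geometric_sum_le) auto
    show "(\<Sum>m\<in>C. 1 / real m) \<le> euler_prod P"
      using insert.IH insert.prems C_factors by (auto simp: C_def)
  qed (use \<open>q \<ge> 2\<close> in \<open>auto intro: sum_nonneg\<close>)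
  also have "\<dots> = euler_prod (insert q P)"
    using insert.hyps by (simp add: euler_prod_def)
  finally show ?case .
qed

definition primes_between :: "nat \<Rightarrow> nat \<Rightarrow> nat set" where
  "primes_between N M = {p. prime p \<and> N < p \<and> p \<le> M}"

lemma primes_between_finite_prime:
  shows "finite (primes_between N M)" and "\<forall>p\<in>primes_between N M. prime p"
  unfolding primes_between_def by auto

text \<open>Every integer up to M has all its prime factors up to M, so the harmonic
  number H_M is bounded by the Euler product over the primes up to M.\<close>
lemma harm_le_euler_prod: "harm M \<le> euler_prod (primes_between 0 M)"
proof -
  have "\<forall>n\<in>{1..M}. n > 0 \<and> prime_factors n \<subseteq> primes_between 0 M"
    by (auto simp: primes_between_def in_prime_factors_iff prime_gt_0_nat
        intro: order_trans[OF dvd_imp_le])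
  then have "(\<Sum>n\<in>{1..M}. 1 / real n) \<le> euler_prod (primes_between 0 M)"
    using primes_between_finite_prime by (intro sum_inverse_le_euler_prod) auto
  then show ?thesis by (simp add: harm_def divide_inverse)
qed

text \<open>Since H_M diverges, so does the Euler product over the primes in (N, M],
  for any fixed N: removing finitely many primes only divides by a constant.\<close>
lemma euler_prod_primes_between_unbounded:
  fixes N :: nat and c :: real
  shows "\<exists>M. c < euler_prod (primes_between N M)"
proof -
  define K where "K = euler_prod (primes_between 0 N)"
  have "K > 0" unfolding K_def using primes_between_finite_prime by (intro euler_prod_pos)
  have "eventually (\<lambda>M. c * K < harm M) sequentially"
    using harm_at_top by (rule filterlim_at_top_dense[THEN iffD1, rule_format])
  then obtain M where "M \<ge> N" "c * K < harm M"
    by (metis eventually_sequentially nle_le)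
  have split: "primes_between 0 M = primes_between 0 N \<union> primes_between N M"
    using \<open>M \<ge> N\<close> by (auto simp: primes_between_def)
  have "primes_between 0 N \<inter> primes_between N M = {}"
    by (auto simp: primes_between_def)
  then have "euler_prod (primes_between 0 M) = K * euler_prod (primes_between N M)"
    unfolding K_def euler_prod_def split
    by (intro prod.union_disjoint primes_between_finite_prime(1))
  then have "c * K < K * euler_prod (primes_between N M)"
    using \<open>c * K < harm M\<close> harm_le_euler_prod[of M] by linarith
  then show ?thesis using \<open>K > 0\<close> by (auto simp: mult.commute)
qed

text \<open>The factors p/(p-1) = 1 + 1/(p-1) tend to 1: beyond some N they are all below
  any prescribed r > 1.\<close>
lemma euler_factor_eventually_small:
  fixes r :: real
  assumes "r > 1"
  obtains N :: nat where "\<And>p. N < p \<Longrightarrow> real p / (real p - 1) < r"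
proof -
  obtain N :: nat where N: "1 / (r - 1) < real N" using reals_Archimedean2 by blast
  have "real p / (real p - 1) < r" if "N < p" for p :: nat
  proof -
    have "1 / (r - 1) < real p - 1" using N that by linarith
    moreover have "1 / (r - 1) > 0" using assms by simp
    ultimately have "real p - 1 > 0" by linarith
    have "1 < (real p - 1) * (r - 1)"
      using \<open>1 / (r - 1) < real p - 1\<close> assms by (simp add: divide_less_eq)
    then have "1 / (real p - 1) < r - 1"
      using \<open>real p - 1 > 0\<close> by (simp add: divide_less_eq mult.commute)
    moreover have "real p / (real p - 1) = 1 + 1 / (real p - 1)"
      using \<open>real p - 1 > 0\<close> by (simp add: field_simps)
    ultimately show ?thesis by simp
  qed
  then show ?thesis using that by blast
qed

text \<open>If all factors above N are below r > 1, then moving from (N, m] to (N, m+1]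
  multiplies the Euler product by less than r: either m+1 contributes one such
  factor or nothing changes.\<close>
lemma euler_prod_primes_between_Suc:
  fixes N m :: nat and r a :: real
  assumes small: "\<And>p. N < p \<Longrightarrow> real p / (real p - 1) < r"
    and "r > 1" and bound: "euler_prod (primes_between N m) \<le> a"
  shows "euler_prod (primes_between N (Suc m)) < r * a"
proof -
  have "a > 0"
    using bound euler_prod_pos[OF primes_between_finite_prime(2)] by (rule order.strict_trans2[rotated])
  show ?thesis
  proof (cases "prime (Suc m) \<and> N < Suc m")
    case True
    then have "primes_between N (Suc m) = insert (Suc m) (primes_between N m)"
      by (auto simp: primes_between_def le_Suc_eq)
    then have "euler_prod (primes_between N (Suc m)) =
        real (Suc m) / (real (Suc m) - 1) * euler_prod (primes_between N m)"
      by (simp add: euler_prod_def primes_between_def)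
    also have "\<dots> \<le> real (Suc m) / (real (Suc m) - 1) * a"
      using bound by (intro mult_left_mono) auto
    also have "\<dots> < r * a"
      using small[of "Suc m"] True \<open>a > 0\<close> by (intro mult_strict_right_mono) auto
    finally show ?thesis .
  next
    case False
    then have "primes_between N (Suc m) = primes_between N m"
      by (auto simp: primes_between_def le_Suc_eq)
    moreover have "a < r * a" using \<open>r > 1\<close> \<open>a > 0\<close> by simp
    ultimately show ?thesis using bound by simp
  qed
qed

section \<open>A discrete intermediate value argument\<close>

text \<open>A sequence that starts at most a, eventually exceeds a, and never jumps from
  at most a to b or beyond, takes a value in (a, b): look at the first index where
  it exceeds a.\<close>
lemma sequence_crosses_interval:
  fixes Q :: "nat \<Rightarrow> real"
  assumes "Q 0 \<le> a" "\<exists>M. a < Q M" "\<And>m. Q m \<le> a \<Longrightarrow> Q (Suc m) < b"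
  shows "\<exists>M. a < Q M \<and> Q M < b"
proof -
  define M where "M = (LEAST M. a < Q M)"
  have "a < Q M" unfolding M_def using assms(2) by (rule LeastI_ex)
  then obtain m where "M = Suc m" using assms(1) by (cases M) auto
  then have "Q m \<le> a" unfolding M_def using not_less_Least[of m "\<lambda>M. a < Q M"] by auto
  then show ?thesis using \<open>a < Q M\<close> assms(3) \<open>M = Suc m\<close> by blast
qed

theorem proposition4:
  fixes a b :: real
  assumes "1 \<le> a" and "a < b"
  shows "\<exists>n::nat. n \<ge> 1 \<and> a < real (V n) / real (totient n) \<and> real (V n) / real (totient n) < b"
proof -
  have "a > 0" "b / a > 1" using assms by auto
  then obtain N where small: "\<And>p. N < p \<Longrightarrow> real p / (real p - 1) < b / a"
    using euler_factor_eventually_small by blast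
  have "\<exists>M. a < euler_prod (primes_between N M) \<and> euler_prod (primes_between N M) < b"
  proof (rule sequence_crosses_interval)
    have "primes_between N 0 = {}" by (auto simp: primes_between_def)
    then show "euler_prod (primes_between N 0) \<le> a" using assms by (simp add: euler_prod_def)
    show "\<exists>M. a < euler_prod (primes_between N M)"
      by (rule euler_prod_primes_between_unbounded)
    show "euler_prod (primes_between N (Suc m)) < b" if "euler_prod (primes_between N m) \<le> a" for m
      using euler_prod_primes_between_Suc[OF small \<open>b / a > 1\<close> that] \<open>a > 0\<close> by simp
  qed
  then obtain M where M: "a < euler_prod (primes_between N M)" "euler_prod (primes_between N M) < b"
    by blast
  have "\<Prod>(primes_between N M) \<ge> 1"
    using primes_between_finite_prime prime_gt_0_nat by (auto simp: Suc_le_eq intro: prod_pos)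
  moreover have "real (V (\<Prod>(primes_between N M))) / real (totient (\<Prod>(primes_between N M))) =
      euler_prod (primes_between N M)"
    using primes_between_finite_prime by (rule V_totient_ratio_prod_primes)
  ultimately show ?thesis using M by metis
qed

end
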